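(* Consider Algorithm B on an input whose optimal offline makespan is $1$. Then at most one job is handled by Step 4, and if some job is handled by Step 4, then every job arriving after it is handled by Step 2 or Step 3.
   Context: Model (two hierarchical machines with migration). Jobs $1,2,\dots,n$ arrive one by one. Job $j$ has a size $p_j>0$ and a grade of service (GoS) $g_j\in\{1,2\}$; a job of GoS $1$ may only be processed on machine $m_1$, a job of GoS $2$ on $m_1$ or $m_2$. When job $j$ arrives, the algorithm assigns it and may migrate previously arrived jobs of total size at most $M\cdot p_j$. Bin stretching: the optimal offline makespan of the complete input is $1$ and is known in advance. Notation: $Y_{j}$ is the set of jobs on $m_2$ just after job $j$ has been handled (including migrations), $y_j$ its total size, $y_0=0$. $p^{\max Y}_j$ and $p^{\max Y,2}_j$ are the largest and second largest sizes of jobs in $Y_{j-1}$ (each defined as $0$ if it does not exist), and $j^{\max Y}$ is a job of $Y_{j-1}$ of size $p^{\max Y}_j$. "Sorted $Y_{j-1}$" means the jobs of $Y_{j-1}$ listed in non-increasing order of size; $w_j$ denotes the total size of the set $W$ chosen when handling $j$. Algorithm B. On arrival of job $j$: Step 2: if $g_j=1$ or $y_{j-1}\ge 0.75$, assign $j$ to $m_1$. Step 3: else if $y_{j-1}+p_j\le 1.25$, assign $j$ to $m_2$. Step 4: else if $p_j\ge 0.75$: let $W$ be the longest prefix of sorted $Y_{j-1}$ with total size at most $0.75p_j$ (possibly empty). If $y_{j-1}-w_j+p_j>1.25$, assign $j$ to $m_1$ (no migration); otherwise migrate the jobs of $W$ to $m_1$ and assign $j$ to $m_2$. Step 5: else (so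 $p_j<0.75$): if $p_j+p^{\max Y}_j>1.25$, assign $j$ to $m_1$. Otherwise choose $W$ as follows: if $p^{\max Y}_j\ge y_{j-1}/2$, let $W=Y_{j-1}\setminus\{j^{\max Y}\}$; if $0.25\le p^{\max Y}_j<y_{j-1}/2$, let $W=\{j^{\max Y}\}$; if $p^{\max Y}_j<0.25$, let $W$ be the shortest prefix of sorted $Y_{j-1}$ with total size at least $0.25$ (or all of $Y_{j-1}$ if none exists), and if then $w_j>0.75p_j$ replace $W$ by $Y_{j-1}\setminus W$. Migrate the jobs of $W$ to $m_1$ and assign $j$ to $m_2$. *)

theory Defs
  imports Complex_Main
begin

text \<open>Jobs are indexed 1..n; p j is the size, g j the grade of service (1 or 2).
  A schedule of the whole input is described by the set S of jobs on machine m2.\<close>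

definition feasible_assignment :: "nat \<Rightarrow> (nat \<Rightarrow> nat) \<Rightarrow> nat set \<Rightarrow> bool" where
  "feasible_assignment n g S \<longleftrightarrow> S \<subseteq> {1..n} \<and> (\<forall>j\<in>S. g j = 2)"

definition makespan :: "nat \<Rightarrow> (nat \<Rightarrow> real) \<Rightarrow> nat set \<Rightarrow> real" where
  "makespan n p S = max (sum p ({1..n} - S)) (sum p S)"

definition opt_makespan :: "nat \<Rightarrow> (nat \<Rightarrow> real) \<Rightarrow> (nat \<Rightarrow> nat) \<Rightarrow> real" where
  "opt_makespan n p g = Min {makespan n p S | S. feasible_assignment n g S}"

definition sorted_listing :: "(nat \<Rightarrow> real) \<Rightarrow> nat set \<Rightarrow> nat list \<Rightarrow> bool" where
  "sorted_listing p Y xs \<longleftrightarrow> distinct xs \<and> set xs = Y \<and> sorted_wrt (\<lambda>a b. p a \<ge> p b) xs"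

definition psum :: "(nat \<Rightarrow> real) \<Rightarrow> nat list \<Rightarrow> nat \<Rightarrow> real" where
  "psum p xs k = sum_list (map p (take k xs))"

definition pmaxY :: "(nat \<Rightarrow> real) \<Rightarrow> nat set \<Rightarrow> real" where
  "pmaxY p Y = (if Y = {} then 0 else Max (p ` Y))"

definition step5_W :: "(nat \<Rightarrow> real) \<Rightarrow> nat \<Rightarrow> nat set \<Rightarrow> nat set \<Rightarrow> bool" where
  "step5_W p j Y W \<longleftrightarrow>
     (let y = sum p Y; pm = pmaxY p Y in
      (pm \<ge> y / 2 \<and> (\<exists>jm\<in>Y. p jm = pm \<and> W = Y - {jm})) \<or>
      (1/4 \<le> pm \<and> pm < y / 2 \<and> (\<exists>jm\<in>Y. p jm = pm \<and> W = {jm})) \<or>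
      (pm < 1/4 \<and> (\<exists>xs k W0. sorted_listing p Y xs \<and> k \<le> length xs \<and>
            (psum p xs k \<ge> 1/4 \<or> k = length xs) \<and> (\<forall>k'<k. psum p xs k' < 1/4) \<and>
            W0 = set (take k xs) \<and>
            W = (if sum p W0 > 3/4 * p j then Y - W0 else W0))))"

text \<open>alg_step p g j Y Y' s: job j, with Y = Y_{j-1}, is handled by Step s of Algorithm B,
  and afterwards the set of jobs on m2 is Y'.  Tie-breaking is arbitrary.\<close>
definition alg_step :: "(nat \<Rightarrow> real) \<Rightarrow> (nat \<Rightarrow> nat) \<Rightarrow> nat \<Rightarrow> nat set \<Rightarrow> nat set \<Rightarrow> nat \<Rightarrow> bool" where
  "alg_step p g j Y Y' s \<longleftrightarrow>
     (let y = sum p Y in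
      (s = 2 \<and> (g j = 1 \<or> y \<ge> 3/4) \<and> Y' = Y) \<or>
      (s = 3 \<and> \<not> (g j = 1 \<or> y \<ge> 3/4) \<and> y + p j \<le> 5/4 \<and> Y' = insert j Y) \<or>
      (s = 4 \<and> \<not> (g j = 1 \<or> y \<ge> 3/4) \<and> \<not> (y + p j \<le> 5/4) \<and> p j \<ge> 3/4 \<and>
         (\<exists>xs k. sorted_listing p Y xs \<and> k \<le> length xs \<and> psum p xs k \<le> 3/4 * p j \<and>
            (\<forall>k'. k' \<le> length xs \<and> psum p xs k' \<le> 3/4 * p j \<longrightarrow> k' \<le> k) \<and>
            (let W = set (take k xs) in
              if y - sum p W + p j > 5/4 then Y' = Y else Y' = insert j (Y - W)))) \<or>
      (s = 5 \<and> \<not> (g j = 1 \<or> y \<ge> 3/4) \<and> \<not> (y + p j \<le> 5/4) \<and> \<not> (p j \<ge> 3/4) \<and>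
         (if p j + pmaxY p Y > 5/4 then Y' = Y
          else (\<exists>W. step5_W p j Y W \<and> Y' = insert j (Y - W)))))"

text \<open>A run of Algorithm B on jobs 1..n: Ys j = Y_j, st j = step handling job j.\<close>
definition alg_run :: "nat \<Rightarrow> (nat \<Rightarrow> real) \<Rightarrow> (nat \<Rightarrow> nat) \<Rightarrow> (nat \<Rightarrow> nat set) \<Rightarrow> (nat \<Rightarrow> nat) \<Rightarrow> bool" where
  "alg_run n p g Ys st \<longleftrightarrow> Ys 0 = {} \<and>
     (\<forall>j\<in>{1..n}. alg_step p g j (Ys (j - 1)) (Ys j) (st j))"

end

theory Submission
  imports Defs
begin

text \<open>Since the optimum is 1, the total size is at most 2. A job j handled by Step 4 has
  p j \<ge> 3/4. If it goes to m2, the load of m2 is at least 3/4 from then on, so every later job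
  is handled by Step 2 and m2 never changes again. If it goes to m1, it never returns to m2;
  for every later job k the jobs on m2 together with j and k then have total size at most 2,
  so y + p k \<le> 2 - p j \<le> 5/4 and k is handled by Step 2 or Step 3. In both cases no second
  job reaches Step 4.\<close>

lemma sum_le_twice_opt_makespan: "sum p {1..n} \<le> 2 * opt_makespan n p g"
proof -
  let ?A = "{makespan n p S | S. feasible_assignment n g S}"
  have "?A = makespan n p ` {S. feasible_assignment n g S}" by auto
  moreover have "finite {S. feasible_assignment n g S}"
    by (rule finite_subset[of _ "Pow {1..n}"]) (auto simp: feasible_assignment_def)
  ultimately have "finite ?A" by simp
  moreover have "?A \<noteq> {}" by (auto simp: feasible_assignment_def)
  ultimately have "Min ?A \<in> ?A" by (rule Min_in)
  then obtain S where S: "feasible_assignment n g S" "makespan n p S = opt_makespan n p g"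
    unfolding opt_makespan_def by auto
  have "S \<subseteq> {1..n}" using S(1) by (simp add: feasible_assignment_def)
  then have "sum p {1..n} = sum p ({1..n} - S) + sum p S"
    using sum.subset_diff by auto
  also have "\<dots> \<le> 2 * makespan n p S" unfolding makespan_def by linarith
  finally show ?thesis using S(2) by simp
qed

lemma alg_step_subset_insert: "alg_step p g j Y Y' s \<Longrightarrow> Y' \<subseteq> insert j Y"
  unfolding alg_step_def Let_def
  by (elim disjE conjE exE; (split if_split_asm)?; blast)

lemma alg_step_4_cases:
  "alg_step p g j Y Y' 4 \<Longrightarrow> p j \<ge> 3/4 \<and> (Y' = Y \<or> (\<exists>W. Y' = insert j (Y - W)))"
  unfolding alg_step_def Let_def
  by (elim disjE conjE exE; (split if_split_asm)?; (simp; blast))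

lemma alg_step_loaded: "alg_step p g j Y Y' s \<Longrightarrow> sum p Y \<ge> 3/4 \<Longrightarrow> s = 2 \<and> Y' = Y"
  unfolding alg_step_def Let_def by blast

lemma alg_step_fits:
  "alg_step p g j Y Y' s \<Longrightarrow> sum p Y + p j \<le> 5/4 \<Longrightarrow>
    (s = 2 \<and> Y' = Y) \<or> (s = 3 \<and> Y' = insert j Y)"
  unfolding alg_step_def Let_def by auto

lemma alg_run_step:
  "alg_run n p g Ys st \<Longrightarrow> k < n \<Longrightarrow> alg_step p g (Suc k) (Ys k) (Ys (Suc k)) (st (Suc k))"
  unfolding alg_run_def by (auto dest!: bspec[of _ _ "Suc k"])

lemma alg_run_subset:
  assumes "alg_run n p g Ys st" "i \<le> n"
  shows "Ys i \<subseteq> {1..i}"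
  using assms(2)
proof (induction i)
  case 0
  then show ?case using assms(1) by (simp add: alg_run_def)
next
  case (Suc i)
  then have "Ys (Suc i) \<subseteq> insert (Suc i) (Ys i)"
    using alg_step_subset_insert[OF alg_run_step[OF assms(1)]] by simp
  also have "\<dots> \<subseteq> insert (Suc i) {1..i}" using Suc by auto
  finally show ?case by auto
qed

lemma alg_run_loaded_frozen:
  assumes run: "alg_run n p g Ys st" and loaded: "sum p (Ys j) \<ge> 3/4"
    and "j \<le> k" "k \<le> n"
  shows "Ys k = Ys j \<and> (j < k \<longrightarrow> st k = 2)"
  using assms(3,4)
proof (induction k rule: dec_induct)
  case (step k)
  then show ?case
    using alg_step_loaded[OF alg_run_step[OF run], of k] loaded by auto
qed simp

lemma alg_run_excluded_big_job:
  assumes run: "alg_run n p g Ys st"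
    and nonneg: "\<forall>i\<in>{1..n}. 0 \<le> p i" and total: "sum p {1..n} \<le> 2"
    and j: "1 \<le> j" "p j \<ge> 3/4" "j \<notin> Ys j"
    and "j \<le> k" and kn: "k \<le> n"
  shows "j \<notin> Ys k \<and> (j < k \<longrightarrow> st k = 2 \<or> st k = 3)"
  using \<open>j \<le> k\<close>
proof (induction k rule: dec_induct)
  case (step m)
  have mn: "m < n" using step.hyps kn by simp
  have jY: "j \<notin> Ys m" using step.IH by simp
  have Y: "Ys m \<subseteq> {1..m}" using alg_run_subset[OF run] mn by simp
  \<comment> \<open>Ys m, j and Suc m are disjoint parts of the whole input.\<close>
  have "Suc m \<notin> insert j (Ys m)" using Y step.hyps by auto
  then have "sum p (Ys m) + p j + p (Suc m) = sum p (insert (Suc m) (insert j (Ys m)))"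
    using jY finite_subset[OF Y] by simp
  also have "\<dots> \<le> sum p {1..n}"
    using Y j(1) step.hyps mn nonneg by (intro sum_mono2) auto
  finally have "sum p (Ys m) + p (Suc m) \<le> 5/4"
    using total j(2) by linarith
  then have "Ys (Suc m) = Ys m \<or> Ys (Suc m) = insert (Suc m) (Ys m)"
    and "st (Suc m) = 2 \<or> st (Suc m) = 3"
    using alg_step_fits[OF alg_run_step[OF run mn]] by auto
  then show ?case using jY step.hyps by auto
qed (simp add: j(3))

lemma alg_run_after_step_4:
  assumes run: "alg_run n p g Ys st"
    and nonneg: "\<forall>i\<in>{1..n}. 0 \<le> p i" and total: "sum p {1..n} \<le> 2"
    and j: "j \<in> {1..n}" "st j = 4" and k: "j < k" "k \<le> n"
  shows "st k = 2 \<or> st k = 3"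
proof -
  obtain i where i: "j = Suc i" "i < n" using j(1) by (cases j) auto
  have big: "p j \<ge> 3/4" and cases: "Ys j = Ys i \<or> (\<exists>W. Ys j = insert j (Ys i - W))"
    using alg_step_4_cases alg_run_step[OF run i(2)] i(1) j(2) by auto
  have Yi: "Ys i \<subseteq> {1..i}" using alg_run_subset[OF run] i by simp
  show ?thesis
  proof (cases "Ys j = Ys i")
    case True
    then have "j \<notin> Ys j" using Yi i(1) by auto
    then have "j \<notin> Ys k \<and> (j < k \<longrightarrow> st k = 2 \<or> st k = 3)"
      by (intro alg_run_excluded_big_job[OF run nonneg total _ big]) (use i k in auto)
    with k show ?thesis by blast
  next
    case False
    then obtain W where W: "Ys j = insert j (Ys i - W)" using cases by blast
    have "finite (Ys i - W)" "j \<notin> Ys i - W"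
      using Yi i(1) finite_subset[OF Yi] by auto
    then have "sum p (Ys j) = p j + sum p (Ys i - W)"
      using W by simp
    moreover have "sum p (Ys i - W) \<ge> 0"
      using Yi i nonneg by (intro sum_nonneg) auto
    ultimately have "sum p (Ys j) \<ge> 3/4" using big by linarith
    then have "Ys k = Ys j \<and> (j < k \<longrightarrow> st k = 2)"
      by (intro alg_run_loaded_frozen[OF run]) (use k in auto)
    with k show ?thesis by blast
  qed
qed

theorem mainTheorem7:
  fixes n :: nat and p :: "nat \<Rightarrow> real" and g :: "nat \<Rightarrow> nat"
    and Ys :: "nat \<Rightarrow> nat set" and st :: "nat \<Rightarrow> nat"
  assumes pos: "\<forall>j\<in>{1..n}. p j > 0"
    and gos: "\<forall>j\<in>{1..n}. g j \<in> {1, 2}"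
    and opt: "opt_makespan n p g = 1"
    and run: "alg_run n p g Ys st"
  shows "card {j\<in>{1..n}. st j = 4} \<le> 1
    \<and> (\<forall>j\<in>{1..n}. st j = 4 \<longrightarrow> (\<forall>k\<in>{j<..n}. st k = 2 \<or> st k = 3))"
proof -
  have nonneg: "\<forall>i\<in>{1..n}. 0 \<le> p i" using pos by (simp add: less_imp_le)
  have total: "sum p {1..n} \<le> 2" using sum_le_twice_opt_makespan[of p n g] opt by simp
  have after: "\<forall>j\<in>{1..n}. st j = 4 \<longrightarrow> (\<forall>k\<in>{j<..n}. st k = 2 \<or> st k = 3)"
    by (intro ballI impI, rule alg_run_after_step_4[OF run nonneg total]) auto
  have "card {j\<in>{1..n}. st j = 4} \<le> Suc 0"
  proof (subst card_le_Suc0_iff_eq, simp, intro ballI)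
    have no_later_4: False if "i \<in> {1..n}" "st i = 4" "k \<in> {i<..n}" "st k = 4" for i k
      using after that by fastforce
    fix a b assume "a \<in> {j\<in>{1..n}. st j = 4}" "b \<in> {j\<in>{1..n}. st j = 4}"
    then show "a = b"
      using no_later_4[of a b] no_later_4[of b a] by (cases a b rule: linorder_cases) auto
  qed
  with after show ?thesis by simp
qed

end
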